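(* Let $D$ be a finite distributive lattice and $Q\subseteq D$, and suppose the inclusion $Q\subseteq D$ is chain-representable, say $Q=\mathrm{Rep}(C,\sigma,D)$ for a $J(D)$-colored chain $(C,\sigma,D)$. Then there exist a finite algebra $A$ with $|A|=|C|$ and a lattice isomorphism $\phi\colon\mathrm{Con}(A)\to D$ such that $\phi(\mathrm{Princ}(A))=Q$. (Here $1_D\in Q$ is not assumed.)
   Context: $J(D)$ is the set of nonzero join-irreducible elements of $D$. A $J(D)$-colored chain is a triple $(C,\sigma,D)$ where $C$ is a finite chain and $\sigma\colon\mathrm{Prime}(C)\to J(D)$ is a surjective map from the set $\mathrm{Prime}(C)$ of prime intervals (covering pairs) of $C$ onto $J(D)$. For an interval $I$ of $C$, $\mathrm{rep}(I)=\bigvee_{\mathfrak p\in\mathrm{Prime}(I)}\sigma(\mathfrak p)$ (join in $D$, empty join $=0_D$), and $\mathrm{Rep}(C,\sigma,D)=\{\mathrm{rep}(I): I\text{ an interval of }C\}$. The inclusion $Q\subseteq D$ is chain-representable if $Q=\mathrm{Rep}(C,\sigma,D)$ for some such triple. For an algebra $A$, $\mathrm{Con}(A)$ is its congruence lattice and $\mathrm{Princ}(A)$ its set of principal congruences. *)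

theory Defs
  imports Main
begin

definition join_irreducibles :: "'d::bounded_lattice set" where
  "join_irreducibles = {x. x \<noteq> bot \<and> (\<forall>a b. x = sup a b \<longrightarrow> x = a \<or> x = b)}"

text \<open>A finite chain is a finite nonempty subset C of a linearly ordered type.
  Prime intervals are covering pairs (x,y) of C; intervals are pairs (a,b)
  with a \<le> b in C, standing for [a,b].\<close>

definition prime_intervals :: "'c::linorder set \<Rightarrow> ('c \<times> 'c) set" where
  "prime_intervals C = {(x, y). x \<in> C \<and> y \<in> C \<and> x < y \<and> \<not> (\<exists>z\<in>C. x < z \<and> z < y)}"

definition intervals :: "'c::linorder set \<Rightarrow> ('c \<times> 'c) set" where
  "intervals C = {(a, b). a \<in> C \<and> b \<in> C \<and> a \<le> b}"

definition prime_of_interval :: "'c::linorder set \<Rightarrow> 'c \<times> 'c \<Rightarrow> ('c \<times> 'c) set" where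
  "prime_of_interval C I = {(x, y) \<in> prime_intervals C. fst I \<le> x \<and> y \<le> snd I}"

definition colored_chain :: "'c::linorder set \<Rightarrow> ('c \<times> 'c \<Rightarrow> 'd::bounded_lattice) \<Rightarrow> bool" where
  "colored_chain C \<sigma> \<longleftrightarrow> finite C \<and> C \<noteq> {} \<and> \<sigma> ` prime_intervals C = join_irreducibles"

definition rep :: "'c::linorder set \<Rightarrow> ('c \<times> 'c \<Rightarrow> 'd::bounded_lattice) \<Rightarrow> 'c \<times> 'c \<Rightarrow> 'd" where
  "rep C \<sigma> I = Finite_Set.fold sup bot (\<sigma> ` prime_of_interval C I)"

definition Rep :: "'c::linorder set \<Rightarrow> ('c \<times> 'c \<Rightarrow> 'd::bounded_lattice) \<Rightarrow> 'd set" where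
  "Rep C \<sigma> = rep C \<sigma> ` intervals C"

text \<open>An algebra is a carrier A together with a set F of operations; each operation
  is a pair (n, f) where n is the arity and f acts on lists of length n.\<close>

definition is_algebra :: "'a set \<Rightarrow> (nat \<times> ('a list \<Rightarrow> 'a)) set \<Rightarrow> bool" where
  "is_algebra A F \<longleftrightarrow> A \<noteq> {} \<and>
     (\<forall>(n, f) \<in> F. \<forall>xs. length xs = n \<and> set xs \<subseteq> A \<longrightarrow> f xs \<in> A)"

definition is_congruence :: "'a set \<Rightarrow> (nat \<times> ('a list \<Rightarrow> 'a)) set \<Rightarrow> ('a \<times> 'a) set \<Rightarrow> bool" where
  "is_congruence A F \<theta> \<longleftrightarrow> equiv A \<theta> \<and>
     (\<forall>(n, f) \<in> F. \<forall>xs ys. length xs = n \<and> list_all2 (\<lambda>x y. (x, y) \<in> \<theta>) xs ys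
         \<longrightarrow> (f xs, f ys) \<in> \<theta>)"

definition Con :: "'a set \<Rightarrow> (nat \<times> ('a list \<Rightarrow> 'a)) set \<Rightarrow> ('a \<times> 'a) set set" where
  "Con A F = {\<theta>. is_congruence A F \<theta>}"

definition Cg :: "'a set \<Rightarrow> (nat \<times> ('a list \<Rightarrow> 'a)) set \<Rightarrow> ('a \<times> 'a) set \<Rightarrow> ('a \<times> 'a) set" where
  "Cg A F X = \<Inter> {\<theta> \<in> Con A F. X \<subseteq> \<theta>}"

definition con_meet :: "('a \<times> 'a) set \<Rightarrow> ('a \<times> 'a) set \<Rightarrow> ('a \<times> 'a) set" where
  "con_meet \<theta> \<psi> = \<theta> \<inter> \<psi>"

definition con_join :: "'a set \<Rightarrow> (nat \<times> ('a list \<Rightarrow> 'a)) set \<Rightarrow> ('a \<times> 'a) set \<Rightarrow> ('a \<times> 'a) set \<Rightarrow> ('a \<times> 'a) set" where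
  "con_join A F \<theta> \<psi> = Cg A F (\<theta> \<union> \<psi>)"

definition Princ :: "'a set \<Rightarrow> (nat \<times> ('a list \<Rightarrow> 'a)) set \<Rightarrow> ('a \<times> 'a) set set" where
  "Princ A F = {Cg A F {(a, b)} | a b. a \<in> A \<and> b \<in> A}"

definition con_lattice_iso :: "'a set \<Rightarrow> (nat \<times> ('a list \<Rightarrow> 'a)) set \<Rightarrow> (('a \<times> 'a) set \<Rightarrow> 'd::lattice) \<Rightarrow> bool" where
  "con_lattice_iso A F \<phi> \<longleftrightarrow> bij_betw \<phi> (Con A F) UNIV \<and>
     (\<forall>\<theta>\<in>Con A F. \<forall>\<psi>\<in>Con A F.
        \<phi> (con_meet \<theta> \<psi>) = inf (\<phi> \<theta>) (\<phi> \<psi>) \<and> \<phi> (con_join A F \<theta> \<psi>) = sup (\<phi> \<theta>) (\<phi> \<psi>))"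

end

theory Submission
  imports Defs
begin

text \<open>The algebra lives on the chain C itself. For prime intervals p and q with
  \<sigma> q \<le> \<sigma> p there is a unary operation sending everything up to the bottom of p
  to the bottom of q and everything else to the top of q. A congruence collapsing p
  therefore collapses every q of smaller colour, and it collapses an interval iff it
  collapses all prime intervals inside it. Hence the congruences are exactly the
  relations \<Theta>(d) = {(x, y). rep [x, y] \<le> d}, and since D is determined by its
  join-irreducibles (which are the colours, and are join-prime in a distributive
  lattice) d \<mapsto> \<Theta>(d) is an isomorphism D \<cong> Con(A), under which Cg(a, b) corresponds
  to rep [a, b].\<close>

definition fin_sup :: "'d::bounded_lattice set \<Rightarrow> 'd" where
  "fin_sup S = Finite_Set.fold sup bot S"

lemma fin_sup_empty [simp]: "fin_sup {} = bot"
  by (simp add: fin_sup_def)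

lemma fin_sup_insert:
  fixes S :: "'d::bounded_lattice set"
  assumes "finite S"
  shows "fin_sup (insert x S) = sup x (fin_sup S)"
proof -
  interpret comp_fun_idem "sup :: 'd \<Rightarrow> 'd \<Rightarrow> 'd" by (fact comp_fun_idem_sup)
  show ?thesis unfolding fin_sup_def using assms by (rule fold_insert_idem)
qed

lemma fin_sup_le_iff: "finite S \<Longrightarrow> fin_sup S \<le> d \<longleftrightarrow> (\<forall>x\<in>S. x \<le> d)"
  by (induction S rule: finite_induct) (auto simp: fin_sup_insert)

lemma fin_sup_upper: "finite S \<Longrightarrow> x \<in> S \<Longrightarrow> x \<le> fin_sup S"
  using fin_sup_le_iff[of S "fin_sup S"] by auto

lemma join_irreducible_le_fin_sup:
  fixes j :: "'d::{distrib_lattice, bounded_lattice}"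
  assumes j: "j \<in> join_irreducibles" and "finite S" and "j \<le> fin_sup S"
  shows "\<exists>s\<in>S. j \<le> s"
  using \<open>finite S\<close> \<open>j \<le> fin_sup S\<close>
proof (induction S rule: finite_induct)
  case empty
  then show ?case using j by (simp add: join_irreducibles_def bot_unique)
next
  case (insert x S)
  have "j = inf j (sup x (fin_sup S))"
    using insert by (simp add: fin_sup_insert inf_absorb1)
  also have "\<dots> = sup (inf j x) (inf j (fin_sup S))"
    by (rule inf_sup_distrib1)
  finally have "j = inf j x \<or> j = inf j (fin_sup S)"
    using j unfolding join_irreducibles_def by blast
  then have "j \<le> x \<or> j \<le> fin_sup S"
    by (metis inf.cobounded2)
  then show ?case using insert by auto
qed

lemma le_if_join_irreducibles_le:
  fixes d e :: "'d::{finite, bounded_lattice}"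
  assumes "\<And>j. j \<in> join_irreducibles \<Longrightarrow> j \<le> d \<Longrightarrow> j \<le> e"
  shows "d \<le> e"
proof (rule ccontr)
  assume "\<not> d \<le> e"
  then have "{m. m \<le> d \<and> \<not> m \<le> e} \<noteq> {}" by auto
  then obtain m where m: "m \<le> d" "\<not> m \<le> e"
    and minimal: "\<And>b. b \<le> d \<Longrightarrow> \<not> b \<le> e \<Longrightarrow> b \<le> m \<Longrightarrow> b = m"
    using finite_has_minimal[of "{m. m \<le> d \<and> \<not> m \<le> e}"] by (auto simp: eq_commute)
  have "m \<in> join_irreducibles"
    unfolding join_irreducibles_def
  proof (intro CollectI conjI allI impI)
    show "m \<noteq> bot" using m by auto
  next
    fix a b assume mab: "m = sup a b"
    show "m = a \<or> m = b"
    proof (rule ccontr)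
      assume "\<not> (m = a \<or> m = b)"
      then have "a \<le> e" "b \<le> e"
        using minimal m mab by (metis order_trans sup.cobounded1, metis order_trans sup.cobounded2)
      then show False using m mab by auto
    qed
  qed
  then show False using assms m by auto
qed

lemma finite_prime_intervals: "finite C \<Longrightarrow> finite (prime_intervals C)"
  by (rule finite_subset[of _ "C \<times> C"]) (auto simp: prime_intervals_def)

lemma finite_prime_of_interval: "finite C \<Longrightarrow> finite (prime_of_interval C I)"
  by (rule finite_subset[OF _ finite_prime_intervals]) (auto simp: prime_of_interval_def)

lemma rep_le_iff:
  "finite C \<Longrightarrow> rep C \<sigma> I \<le> d \<longleftrightarrow> (\<forall>p\<in>prime_of_interval C I. \<sigma> p \<le> d)"
  unfolding rep_def fin_sup_def[symmetric]
  by (simp add: fin_sup_le_iff finite_prime_of_interval)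

lemma prime_of_interval_prime:
  assumes "q \<in> prime_intervals C"
  shows "prime_of_interval C q = {q}"
proof
  show "prime_of_interval C q \<subseteq> {q}"
  proof
    fix p assume p: "p \<in> prime_of_interval C q"
    have "fst q \<le> fst p" "snd p \<le> snd q" "fst p < snd p" "fst p \<in> C" "snd p \<in> C"
      and "\<not> (\<exists>z\<in>C. fst q < z \<and> z < snd q)"
      using p assms by (auto simp: prime_of_interval_def prime_intervals_def)
    then have "fst p = fst q" "snd p = snd q"
      by (metis order.strict_trans2 le_less, metis order.strict_trans1 le_less)
    then show "p \<in> {q}" by (simp add: prod_eq_iff)
  qed
next
  show "{q} \<subseteq> prime_of_interval C q"
    using assms by (auto simp: prime_of_interval_def)
qed

lemma rep_prime: "q \<in> prime_intervals C \<Longrightarrow> rep C \<sigma> q = \<sigma> q"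
  by (simp add: rep_def prime_of_interval_prime)

lemma rep_refl: "rep C \<sigma> (x, x) = bot"
proof -
  have "prime_of_interval C (x, x) = {}"
    by (auto simp: prime_of_interval_def prime_intervals_def)
  then show ?thesis by (simp add: rep_def)
qed

lemma prime_of_interval_min_max_trans:
  assumes "y \<in> C"
  shows "prime_of_interval C (min x z, max x z)
    \<subseteq> prime_of_interval C (min x y, max x y) \<union> prime_of_interval C (min y z, max y z)"
proof clarify
  fix u v assume "(u, v) \<in> prime_of_interval C (min x z, max x z)"
    and "(u, v) \<notin> prime_of_interval C (min y z, max y z)"
  moreover have "y \<le> u \<or> v \<le> y"
    if "(u, v) \<in> prime_intervals C" using that assms by (auto simp: prime_intervals_def not_less)
  ultimately show "(u, v) \<in> prime_of_interval C (min x y, max x y)"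
    by (auto simp: prime_of_interval_def prime_intervals_def min_def max_def split: if_splits)
qed

lemma min_max_mem_iff:
  assumes "sym \<theta>"
  shows "(min x y, max x y) \<in> \<theta> \<longleftrightarrow> (x, y) \<in> \<theta>"
  using assms by (cases "x \<le> y") (auto simp: min_def max_def dest: symD)

text \<open>Induction on the number of elements of C below y: the largest such element y'
  forms a prime interval (y', y) with y.\<close>

lemma interval_mem_equiv_if_primes_mem:
  fixes C :: "'c::linorder set"
  assumes "finite C" and "equiv C \<theta>"
    and "x \<in> C" "y \<in> C" "x \<le> y" and "prime_of_interval C (x, y) \<subseteq> \<theta>"
  shows "(x, y) \<in> \<theta>"
  using assms(3-)
proof (induction "card {z\<in>C. z < y}" arbitrary: y rule: less_induct)
  case less
  show ?case
  proof (cases "x = y")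
    case True
    then show ?thesis using \<open>equiv C \<theta>\<close> \<open>x \<in> C\<close> by (auto elim: equivE dest: refl_onD)
  next
    case False
    let ?S = "{z\<in>C. z < y}"
    have "finite ?S" using \<open>finite C\<close> by simp
    have "x \<in> ?S" using False less.prems by auto
    define y' where "y' = Max ?S"
    have "y' \<in> ?S" unfolding y'_def using \<open>finite ?S\<close> \<open>x \<in> ?S\<close> by (metis Max_in empty_iff)
    have "x \<le> y'" and y'_max: "\<And>z. z \<in> ?S \<Longrightarrow> z \<le> y'"
      using \<open>finite ?S\<close> \<open>x \<in> ?S\<close> unfolding y'_def by simp_all
    have prime: "(y', y) \<in> prime_intervals C"
      using \<open>y' \<in> ?S\<close> y'_max less.prems unfolding prime_intervals_def by force
    have "card {z\<in>C. z < y'} < card ?S"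
      using \<open>y' \<in> ?S\<close> by (intro psubset_card_mono \<open>finite ?S\<close>) auto
    moreover have "prime_of_interval C (x, y') \<subseteq> \<theta>"
      using less.prems \<open>y' \<in> ?S\<close> by (auto simp: prime_of_interval_def)
    ultimately have "(x, y') \<in> \<theta>"
      using less.hyps \<open>y' \<in> ?S\<close> \<open>x \<le> y'\<close> less.prems(1) by auto
    moreover have "(y', y) \<in> \<theta>"
      using less.prems prime \<open>x \<le> y'\<close> by (auto simp: prime_of_interval_def)
    ultimately show ?thesis using \<open>equiv C \<theta>\<close> by (meson equivE transD)
  qed
qed

lemma Rep_eq_image_min_max: "Rep C \<sigma> = (\<lambda>(a, b). rep C \<sigma> (min a b, max a b)) ` (C \<times> C)"
proof (intro equalityI subsetI)
  fix r assume "r \<in> Rep C \<sigma>"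
  then obtain a b where "a \<in> C" "b \<in> C" "a \<le> b" "r = rep C \<sigma> (a, b)"
    unfolding Rep_def intervals_def by blast
  then have "r = (\<lambda>(a, b). rep C \<sigma> (min a b, max a b)) (a, b)" "(a, b) \<in> C \<times> C"
    by (simp_all add: min_absorb1 max_absorb2)
  then show "r \<in> (\<lambda>(a, b). rep C \<sigma> (min a b, max a b)) ` (C \<times> C)"
    by (rule image_eqI)
next
  fix r assume "r \<in> (\<lambda>(a, b). rep C \<sigma> (min a b, max a b)) ` (C \<times> C)"
  then obtain a b where "a \<in> C" "b \<in> C" "r = rep C \<sigma> (min a b, max a b)"
    by auto
  then have "r = rep C \<sigma> (min a b, max a b)" "(min a b, max a b) \<in> intervals C"
    by (auto simp: intervals_def min_def max_def)
  then show "r \<in> Rep C \<sigma>"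
    unfolding Rep_def by (rule image_eqI)
qed

lemma is_congruence_unary:
  assumes "is_congruence A F \<theta>" and "(1, \<lambda>xs. f (hd xs)) \<in> F" and "(x, y) \<in> \<theta>"
  shows "(f x, f y) \<in> \<theta>"
proof -
  have "\<forall>xs ys. length xs = 1 \<and> list_all2 (\<lambda>x y. (x, y) \<in> \<theta>) xs ys \<longrightarrow> (f (hd xs), f (hd ys)) \<in> \<theta>"
    using bspec[OF assms(1)[unfolded is_congruence_def, THEN conjunct2] assms(2)] by simp
  from this[rule_format, of "[x]" "[y]"] show ?thesis using assms(3) by simp
qed

lemma Cg_eq_least:
  assumes Con: "Con A F = range T" and embed: "\<And>d e. T d \<subseteq> T e \<longleftrightarrow> d \<le> e"
    and "X \<subseteq> T d" and least: "\<And>e. X \<subseteq> T e \<Longrightarrow> d \<le> e"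
  shows "Cg A F X = T d"
proof (rule antisym)
  show "Cg A F X \<subseteq> T d"
    unfolding Cg_def by (rule Inter_lower) (use Con \<open>X \<subseteq> T d\<close> in auto)
  show "T d \<subseteq> Cg A F X"
    unfolding Cg_def
  proof (rule Inter_greatest)
    fix \<theta> assume "\<theta> \<in> {\<theta> \<in> Con A F. X \<subseteq> \<theta>}"
    then obtain e where "\<theta> = T e" "X \<subseteq> T e" using Con by auto
    then show "T d \<subseteq> \<theta>" using least embed by blast
  qed
qed

lemma inj_if_subset_iff_le:
  fixes T :: "'d::order \<Rightarrow> 'b set"
  assumes "\<And>d e. T d \<subseteq> T e \<longleftrightarrow> d \<le> e"
  shows "inj T"
  by (rule injI) (metis assms order.antisym order.refl)

lemma con_lattice_iso_inv_into:
  fixes T :: "'d::lattice \<Rightarrow> ('a \<times> 'a) set"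
  assumes Con: "Con A F = range T" and embed: "\<And>d e. T d \<subseteq> T e \<longleftrightarrow> d \<le> e"
    and inf: "\<And>d e. T (inf d e) = T d \<inter> T e"
  shows "con_lattice_iso A F (inv_into UNIV T)"
proof -
  have "inj T" using embed by (rule inj_if_subset_iff_le)
  then have inv_T: "inv_into UNIV T (T d) = d" for d by simp
  have join: "con_join A F (T d) (T e) = T (sup d e)" for d e
    unfolding con_join_def
  proof (rule Cg_eq_least[OF Con embed])
    show "T d \<union> T e \<subseteq> T (sup d e)"
      using embed[of d "sup d e"] embed[of e "sup d e"] by auto
    show "sup d e \<le> f" if "T d \<union> T e \<subseteq> T f" for f
      using that embed[of d f] embed[of e f] by simp
  qed
  have bij: "bij_betw (inv_into UNIV T) (Con A F) UNIV"
    unfolding Con by (rule bij_betw_inv_into[OF inj_on_imp_bij_betw[OF \<open>inj T\<close>]])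
  show ?thesis
    unfolding con_lattice_iso_def
  proof (rule conjI[OF bij], intro ballI)
    fix \<theta> \<psi> assume "\<theta> \<in> Con A F" "\<psi> \<in> Con A F"
    then obtain d e where de: "\<theta> = T d" "\<psi> = T e" using Con by auto
    then have "con_meet \<theta> \<psi> = T (inf d e)" "con_join A F \<theta> \<psi> = T (sup d e)"
      by (simp_all only: con_meet_def inf join)
    then show "inv_into UNIV T (con_meet \<theta> \<psi>) = inf (inv_into UNIV T \<theta>) (inv_into UNIV T \<psi>) \<and>
        inv_into UNIV T (con_join A F \<theta> \<psi>) = sup (inv_into UNIV T \<theta>) (inv_into UNIV T \<psi>)"
      by (simp only: de inv_T)
  qed
qed

definition prime_map :: "'c::linorder \<times> 'c \<Rightarrow> 'c \<times> 'c \<Rightarrow> 'c \<Rightarrow> 'c" where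
  "prime_map p q x = (if x \<le> fst p then fst q else snd q)"

definition chain_ops ::
  "'c::linorder set \<Rightarrow> ('c \<times> 'c \<Rightarrow> 'd::bounded_lattice) \<Rightarrow> (nat \<times> ('c list \<Rightarrow> 'c)) set" where
  "chain_ops C \<sigma> = {(1, \<lambda>xs. prime_map p q (hd xs)) | p q.
      p \<in> prime_intervals C \<and> q \<in> prime_intervals C \<and> \<sigma> q \<le> \<sigma> p}"

definition cong_below ::
  "'c::linorder set \<Rightarrow> ('c \<times> 'c \<Rightarrow> 'd::bounded_lattice) \<Rightarrow> 'd \<Rightarrow> ('c \<times> 'c) set" where
  "cong_below C \<sigma> d = {(x, y). x \<in> C \<and> y \<in> C \<and> rep C \<sigma> (min x y, max x y) \<le> d}"

lemma prime_map_ends: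
  assumes "p \<in> prime_intervals C"
  shows "prime_map p q (fst p) = fst q" "prime_map p q (snd p) = snd q"
  using assms by (auto simp: prime_map_def prime_intervals_def)

lemma is_algebra_chain_ops: "C \<noteq> {} \<Longrightarrow> is_algebra C (chain_ops C \<sigma>)"
  by (auto simp: is_algebra_def chain_ops_def prime_map_def prime_intervals_def split: if_split_asm)

lemma is_congruence_prime_map:
  assumes "is_congruence C (chain_ops C \<sigma>) \<theta>"
    and "p \<in> prime_intervals C" "q \<in> prime_intervals C" "\<sigma> q \<le> \<sigma> p" and "(x, y) \<in> \<theta>"
  shows "(prime_map p q x, prime_map p q y) \<in> \<theta>"
proof (rule is_congruence_unary[OF assms(1) _ assms(5)])
  show "(1, \<lambda>xs. prime_map p q (hd xs)) \<in> chain_ops C \<sigma>"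
    unfolding chain_ops_def using assms(2-4) by blast
qed

lemma cong_below_iff:
  "finite C \<Longrightarrow> (x, y) \<in> cong_below C \<sigma> d \<longleftrightarrow>
     x \<in> C \<and> y \<in> C \<and> (\<forall>p\<in>prime_of_interval C (min x y, max x y). \<sigma> p \<le> d)"
  by (simp add: cong_below_def rep_le_iff)

lemma prime_mem_cong_below_iff:
  assumes "q \<in> prime_intervals C"
  shows "q \<in> cong_below C \<sigma> d \<longleftrightarrow> \<sigma> q \<le> d"
  using assms rep_prime[OF assms, of \<sigma>]
  by (auto simp: cong_below_def prime_intervals_def min_def max_def)

lemma equiv_cong_below:
  assumes "finite C"
  shows "equiv C (cong_below C \<sigma> d)"
proof (rule equivI)
  show "cong_below C \<sigma> d \<subseteq> C \<times> C" "refl_on C (cong_below C \<sigma> d)" "sym (cong_below C \<sigma> d)"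
    by (auto simp: cong_below_def refl_on_def sym_def rep_refl min.commute max.commute)
  show "trans (cong_below C \<sigma> d)"
  proof (rule transI)
    fix x y z assume "(x, y) \<in> cong_below C \<sigma> d" "(y, z) \<in> cong_below C \<sigma> d"
    with prime_of_interval_min_max_trans[of y C x z] show "(x, z) \<in> cong_below C \<sigma> d"
      by (auto simp: cong_below_iff[OF assms])
  qed
qed

lemma prime_map_cong_below:
  assumes "finite C" and p: "p \<in> prime_intervals C" and q: "q \<in> prime_intervals C"
    and "\<sigma> q \<le> \<sigma> p" and xy: "(x, y) \<in> cong_below C \<sigma> d"
  shows "(prime_map p q x, prime_map p q y) \<in> cong_below C \<sigma> d"
proof (cases "x \<le> fst p \<longleftrightarrow> y \<le> fst p")
  case True
  have "prime_map p q x \<in> C" using q by (auto simp: prime_map_def prime_intervals_def)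
  with True show ?thesis by (simp add: prime_map_def cong_below_def rep_refl)
next
  case False
  have "min x y \<le> fst p" "fst p < max x y" "max x y \<in> C"
    using False xy by (auto simp: min_def max_def cong_below_def)
  moreover have "\<forall>z\<in>C. z \<le> fst p \<or> snd p \<le> z"
    using p by (auto simp: prime_intervals_def not_less)
  ultimately have "snd p \<le> max x y"
    by (meson not_le)
  then have "p \<in> prime_of_interval C (min x y, max x y)"
    using p \<open>min x y \<le> fst p\<close> by (auto simp: prime_of_interval_def)
  then have "\<sigma> q \<le> d"
    using xy \<open>\<sigma> q \<le> \<sigma> p\<close> cong_below_iff[OF \<open>finite C\<close>] by (blast intro: order_trans)
  then have "q \<in> cong_below C \<sigma> d" "sym (cong_below C \<sigma> d)"
    using prime_mem_cong_below_iff[OF q, of \<sigma> d] equiv_cong_below[OF \<open>finite C\<close>, of \<sigma> d]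
    by (simp_all add: equiv_def)
  with False show ?thesis
    by (cases q) (auto simp: prime_map_def dest: symD)
qed

lemma is_congruence_cong_below:
  assumes "finite C"
  shows "is_congruence C (chain_ops C \<sigma>) (cong_below C \<sigma> d)"
  unfolding is_congruence_def
proof (intro conjI equiv_cong_below[OF assms], clarsimp simp: chain_ops_def)
  fix p q xs ys
  assume pq: "p \<in> prime_intervals C" "q \<in> prime_intervals C" "\<sigma> q \<le> \<sigma> p"
    and "length xs = Suc 0" "list_all2 (\<lambda>x y. (x, y) \<in> cong_below C \<sigma> d) xs ys"
  then obtain x y where "xs = [x]" "ys = [y]" "(x, y) \<in> cong_below C \<sigma> d"
    by (cases xs; cases ys) (auto simp: list_all2_Cons1)
  then show "(prime_map p q (hd xs), prime_map p q (hd ys)) \<in> cong_below C \<sigma> d"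
    using prime_map_cong_below[OF assms pq] by simp
qed

lemma cong_below_subset_iff:
  fixes \<sigma> :: "'c::linorder \<times> 'c \<Rightarrow> 'd::{finite, bounded_lattice}"
  assumes "colored_chain C \<sigma>"
  shows "cong_below C \<sigma> d \<subseteq> cong_below C \<sigma> e \<longleftrightarrow> d \<le> e"
proof
  assume sub: "cong_below C \<sigma> d \<subseteq> cong_below C \<sigma> e"
  show "d \<le> e"
  proof (rule le_if_join_irreducibles_le)
    fix j assume "j \<in> join_irreducibles" "j \<le> d"
    then obtain q where "q \<in> prime_intervals C" "j = \<sigma> q"
      using assms unfolding colored_chain_def by blast
    then show "j \<le> e"
      using sub \<open>j \<le> d\<close> prime_mem_cong_below_iff by blast
  qed
qed (auto simp: cong_below_def)

lemma cong_below_inf: "cong_below C \<sigma> (inf d e) = cong_below C \<sigma> d \<inter> cong_below C \<sigma> e"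
  by (auto simp: cong_below_def)

lemma is_congruence_prime_of_interval:
  assumes "is_congruence C (chain_ops C \<sigma>) \<theta>" and "(x, y) \<in> \<theta>"
  shows "prime_of_interval C (min x y, max x y) \<subseteq> \<theta>"
proof
  fix p assume p: "p \<in> prime_of_interval C (min x y, max x y)"
  then have prime: "p \<in> prime_intervals C" and "min x y \<le> fst p" "fst p < snd p" "snd p \<le> max x y"
    by (auto simp: prime_of_interval_def prime_intervals_def)
  then have "\<not> max x y \<le> fst p"
    by (metis not_le order.strict_trans2)
  then have "prime_map p p (min x y) = fst p" "prime_map p p (max x y) = snd p"
    by (simp_all only: prime_map_def \<open>min x y \<le> fst p\<close> if_True if_False)
  moreover have "(min x y, max x y) \<in> \<theta>"
    using assms by (simp add: min_max_mem_iff is_congruence_def equiv_def)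
  ultimately show "p \<in> \<theta>"
    using is_congruence_prime_map[OF assms(1) prime prime order.refl] by (metis prod.collapse)
qed

lemma is_congruence_prime_le:
  assumes "is_congruence C (chain_ops C \<sigma>) \<theta>"
    and "p \<in> prime_intervals C" "q \<in> prime_intervals C" "\<sigma> q \<le> \<sigma> p" and "p \<in> \<theta>"
  shows "q \<in> \<theta>"
  using is_congruence_prime_map[OF assms(1-4), of "fst p" "snd p"] assms(5)
  by (simp add: prime_map_ends[OF assms(2)])

lemma is_congruence_eq_cong_below:
  fixes \<sigma> :: "'c::linorder \<times> 'c \<Rightarrow> 'd::{finite, distrib_lattice, bounded_lattice}"
  assumes cc: "colored_chain C \<sigma>" and cong: "is_congruence C (chain_ops C \<sigma>) \<theta>"
  shows "\<theta> = cong_below C \<sigma> (fin_sup (\<sigma> ` (prime_intervals C \<inter> \<theta>)))"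
    (is "_ = cong_below C \<sigma> ?d")
proof
  have "finite C" using cc by (simp add: colored_chain_def)
  have fin: "finite (\<sigma> ` (prime_intervals C \<inter> \<theta>))"
    using finite_prime_intervals[OF \<open>finite C\<close>] by simp
  have equiv: "equiv C \<theta>" using cong by (simp add: is_congruence_def)
  show "\<theta> \<subseteq> cong_below C \<sigma> ?d"
  proof clarify
    fix x y assume "(x, y) \<in> \<theta>"
    then have "x \<in> C" "y \<in> C" using equiv_type[OF equiv] by blast+
    have "prime_of_interval C (min x y, max x y) \<subseteq> prime_intervals C \<inter> \<theta>"
      using is_congruence_prime_of_interval[OF cong \<open>(x, y) \<in> \<theta>\<close>]
      by (auto simp: prime_of_interval_def)
    then have "\<forall>q\<in>prime_of_interval C (min x y, max x y). \<sigma> q \<le> ?d"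
      using fin_sup_upper[OF fin] by blast
    with \<open>x \<in> C\<close> \<open>y \<in> C\<close> show "(x, y) \<in> cong_below C \<sigma> ?d"
      by (simp add: cong_below_iff[OF \<open>finite C\<close>])
  qed
  show "cong_below C \<sigma> ?d \<subseteq> \<theta>"
  proof clarify
    fix x y assume "(x, y) \<in> cong_below C \<sigma> ?d"
    then have "x \<in> C" "y \<in> C" and below: "\<forall>q\<in>prime_of_interval C (min x y, max x y). \<sigma> q \<le> ?d"
      by (auto simp: cong_below_iff[OF \<open>finite C\<close>])
    have "q \<in> \<theta>" if q: "q \<in> prime_of_interval C (min x y, max x y)" for q
    proof -
      have "q \<in> prime_intervals C" using q by (cases q) (simp add: prime_of_interval_def)
      then have "\<sigma> q \<in> join_irreducibles" using cc by (auto simp: colored_chain_def)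
      with below q fin obtain p where "p \<in> prime_intervals C \<inter> \<theta>" "\<sigma> q \<le> \<sigma> p"
        using join_irreducible_le_fin_sup by blast
      then show "q \<in> \<theta>"
        using is_congruence_prime_le[OF cong _ \<open>q \<in> prime_intervals C\<close>] by blast
    qed
    then have "(min x y, max x y) \<in> \<theta>"
      using \<open>x \<in> C\<close> \<open>y \<in> C\<close>
      by (intro interval_mem_equiv_if_primes_mem[OF \<open>finite C\<close> equiv]) (auto simp: min_def max_def)
    then show "(x, y) \<in> \<theta>"
      using equiv by (simp add: min_max_mem_iff equiv_def)
  qed
qed

lemma Con_chain_ops:
  fixes \<sigma> :: "'c::linorder \<times> 'c \<Rightarrow> 'd::{finite, distrib_lattice, bounded_lattice}"
  assumes "colored_chain C \<sigma>"
  shows "Con C (chain_ops C \<sigma>) = range (cong_below C \<sigma>)"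
  using is_congruence_eq_cong_below[OF assms] is_congruence_cong_below assms
  unfolding Con_def colored_chain_def by blast

lemma Cg_chain_ops_pair:
  fixes \<sigma> :: "'c::linorder \<times> 'c \<Rightarrow> 'd::{finite, distrib_lattice, bounded_lattice}"
  assumes "colored_chain C \<sigma>" and "a \<in> C" "b \<in> C"
  shows "Cg C (chain_ops C \<sigma>) {(a, b)} = cong_below C \<sigma> (rep C \<sigma> (min a b, max a b))"
  by (rule Cg_eq_least[OF Con_chain_ops cong_below_subset_iff])
    (use assms in \<open>auto simp: cong_below_def\<close>)

theorem proposition1p8:
  fixes C :: "'c::linorder set"
    and \<sigma> :: "'c \<times> 'c \<Rightarrow> 'd::{finite, distrib_lattice, bounded_lattice}"
    and Q :: "'d set"
  assumes "colored_chain C \<sigma>"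
    and "Q = Rep C \<sigma>"
  shows "\<exists>(A :: 'c set) (F :: (nat \<times> ('c list \<Rightarrow> 'c)) set) (\<phi> :: ('c \<times> 'c) set \<Rightarrow> 'd).
           is_algebra A F \<and> finite A \<and> card A = card C \<and>
           con_lattice_iso A F \<phi> \<and> \<phi> ` Princ A F = Q"
proof -
  let ?F = "chain_ops C \<sigma>" and ?T = "cong_below C \<sigma>"
  note Con = Con_chain_ops[OF assms(1)] and embed = cong_below_subset_iff[OF assms(1)]
  have iso: "con_lattice_iso C ?F (inv_into UNIV ?T)"
    by (rule con_lattice_iso_inv_into[OF Con embed cong_below_inf])
  have inv_T: "inv_into UNIV ?T (?T d) = d" for d
    using inj_if_subset_iff_le[OF embed] by simp
  have "inv_into UNIV ?T ` Princ C ?F = (\<lambda>(a, b). inv_into UNIV ?T (Cg C ?F {(a, b)})) ` (C \<times> C)"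
    by (auto simp: Princ_def)
  also have "\<dots> = Rep C \<sigma>"
    unfolding Rep_eq_image_min_max
    by (rule image_cong) (auto simp: Cg_chain_ops_pair[OF assms(1)] inv_T)
  finally have "inv_into UNIV ?T ` Princ C ?F = Rep C \<sigma>" .
  moreover have "is_algebra C ?F" "finite C"
    using assms(1) is_algebra_chain_ops by (auto simp: colored_chain_def)
  ultimately show ?thesis using iso assms(2) by blast
qed

end
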